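(* Let $T=\mathbf R[[x,y,z,w]]/(x^2+y^2)$ and let $R$ be an N-subring of $T$. Let $\omega,h\in T$ be such that the image of $\omega+zh$ in $T/(x,y)T$ is transcendental over the image of $R$ in $T/(x,y)T$. Then there is a subset $\Psi\subseteq\mathbf R$ with $|\Psi|\le|R|$ such that for every $u\in\mathbf R\setminus\Psi$, the image of $\omega+zh$ in $T/(x,y,z+uw)T$ is transcendental over $R/((x,y,z+uw)T\cap R)$.
   Context: $T=\mathbf R[[x,y,z,w]]/(x^2+y^2)$ with maximal ideal $\mathfrak m$; $x,y,z,w$ also denote their images in $T$. An N-subring of $T$ is a quasi-local unique factorization domain $(R,\mathfrak m\cap R)$ contained in $T$ with $|R|<|\mathbf R|$ such that whenever $t\in T$ is nonzero and $P\in\operatorname{Ass}(T/tT)$, $\operatorname{ht}(P\cap R)\le1$. *)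

theory Defs
  imports "HOL-Algebra.Algebra" "HOL-Algebra.Finite_Extensions"
          "HOL-Computational_Algebra.Formal_Power_Series" "HOL-Library.Extended_Nat"
begin

section \<open>The ring R[[x,y,z,w]] realised as the iterated power series ring R[[x]][[y]][[z]][[w]]\<close>

type_synonym ps4 = "real fps fps fps fps"

definition PS :: "ps4 ring" where
  "PS = \<lparr>carrier = UNIV, monoid.mult = (*), one = 1, ring.zero = 0, ring.add = (+)\<rparr>"

definition vw :: ps4 where "vw = fps_X"
definition vz :: ps4 where "vz = fps_const fps_X"
definition vy :: ps4 where "vy = fps_const (fps_const fps_X)"
definition vx :: ps4 where "vx = fps_const (fps_const (fps_const fps_X))"

definition cst :: "real \<Rightarrow> ps4" where
  "cst c = fps_const (fps_const (fps_const (fps_const c)))"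

definition I0 :: "ps4 set" where
  "I0 = genideal PS {vx * vx + vy * vy}"

definition T :: "ps4 set ring" where
  "T = PS Quot I0"

definition cls :: "ps4 \<Rightarrow> ps4 set" where
  "cls a = I0 +>\<^bsub>PS\<^esub> a"

definition xT :: "ps4 set" where "xT = cls vx"
definition yT :: "ps4 set" where "yT = cls vy"
definition zT :: "ps4 set" where "zT = cls vz"
definition wT :: "ps4 set" where "wT = cls vw"

definition mT :: "ps4 set set" where
  "mT = genideal T {xT, yT, zT, wT}"

definition height :: "('a, 'b) ring_scheme \<Rightarrow> 'a set \<Rightarrow> enat" where
  "height S P = Sup {enat n | n. \<exists>c :: nat \<Rightarrow> 'a set. c n = P \<and>
       (\<forall>i\<le>n. primeideal (c i) S) \<and> (\<forall>i<n. c i \<subset> c (Suc i))}"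

text \<open>Associated primes of the T-module T/tT: primes of the form (tT : a).\<close>
definition Ass_quot :: "('a, 'b) ring_scheme \<Rightarrow> 'a \<Rightarrow> 'a set set" where
  "Ass_quot S t = {P. primeideal P S \<and> (\<exists>a \<in> carrier S.
       P = {r \<in> carrier S. r \<otimes>\<^bsub>S\<^esub> a \<in> cgenideal S t})}"

definition quasi_local :: "('a, 'b) ring_scheme \<Rightarrow> 'a set \<Rightarrow> bool" where
  "quasi_local S M \<longleftrightarrow> maximalideal M S \<and> (\<forall>I. maximalideal I S \<longrightarrow> I = M)"

definition N_subring :: "ps4 set set \<Rightarrow> bool" where
  "N_subring R \<longleftrightarrow>
     subring R T \<and>
     factorial_domain (T\<lparr>carrier := R\<rparr>) \<and>
     quasi_local (T\<lparr>carrier := R\<rparr>) (mT \<inter> R) \<and>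
     |R| <o |UNIV :: real set| \<and>
     (\<forall>t \<in> carrier T. t \<noteq> \<zero>\<^bsub>T\<^esub> \<longrightarrow>
        (\<forall>P \<in> Ass_quot T t. height (T\<lparr>carrier := R\<rparr>) (P \<inter> R) \<le> 1))"

definition img :: "ps4 set set \<Rightarrow> ps4 set set \<Rightarrow> ps4 set set set" where
  "img J S = (\<lambda>a. J +>\<^bsub>T\<^esub> a) ` S"

definition Jxy :: "ps4 set set" where
  "Jxy = genideal T {xT, yT}"

definition Jxyzu :: "real \<Rightarrow> ps4 set set" where
  "Jxyzu u = genideal T {xT, yT, zT \<oplus>\<^bsub>T\<^esub> (cls (cst u) \<otimes>\<^bsub>T\<^esub> wT)}"

end

theory Submission
  imports Defs
begin

(* Put f = \<omega> + z h, J = (x, y) and J_u = (x, y, z + u w) for real u, so J \<subseteq> J_u.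
   A polynomial relation of f over R modulo J_u comes from two polynomials q1, q2 over R
   with d = q1(f) - q2(f) \<in> J_u.  If d also lies in J, transcendence of f modulo J forces q1
   and q2 to agree modulo J, hence modulo J_u, so the relation is trivial.  Thus it suffices
   to exclude the u with d \<in> J_u for some difference d \<notin> J; there are at most |R| such
   differences, and each lies in only finitely many J_u.  Setting x = y = 0 in real power series gives
   a ring map ev onto \<real>[[z]][[w]] with kernel (x, y); it kills x^2 + y^2, so it is defined on
   T, and it maps J_u into the multiples of z + u w.  A nonzero series is a multiple of
   z + u w only if it vanishes at z = -u w, which for a fixed homogeneous component is a
   nonzero polynomial equation in u; so only finitely many u qualify. *)

unbundle fps_syntax

lemma cring_PS: "cring PS"
proof -
  have "\<exists>y. x + y = 0" for x :: ps4
    using add.right_inverse by blast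
  then show ?thesis
    unfolding PS_def by unfold_locales (auto simp: algebra_simps Units_def)
qed

interpretation PSr: cring PS by (rule cring_PS)

lemma PS_simps [simp]:
  "carrier PS = UNIV" "x \<otimes>\<^bsub>PS\<^esub> y = x * y" "x \<oplus>\<^bsub>PS\<^esub> y = x + y"
  "\<one>\<^bsub>PS\<^esub> = 1" "\<zero>\<^bsub>PS\<^esub> = 0"
  by (auto simp: PS_def)

lemma PS_minus [simp]: "\<ominus>\<^bsub>PS\<^esub> x = - x"
  using PSr.minus_equality[of "- x" x] by simp

lemma ideal_I0: "ideal I0 PS"
  unfolding I0_def by (rule PSr.genideal_ideal) simp

lemma I0_eq: "I0 = {c * (vx * vx + vy * vy) | c. True}"
  unfolding I0_def PSr.cgenideal_eq_genideal[symmetric, simplified] cgenideal_def by simp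

lemma cring_T: "cring T"
  unfolding T_def by (rule ideal.quotient_is_cring[OF ideal_I0 cring_PS])

interpretation Tr: cring T by (rule cring_T)

lemma carrier_T: "carrier T = range cls"
  unfolding T_def FactRing_def A_RCOSETS_def' cls_def by auto

lemma cls_hom: "cls \<in> ring_hom PS T"
  unfolding T_def cls_def[abs_def] using ideal.rcos_ring_hom[OF ideal_I0] .

lemma cls_simps [simp]:
  "cls (a * b) = cls a \<otimes>\<^bsub>T\<^esub> cls b" "cls (a + b) = cls a \<oplus>\<^bsub>T\<^esub> cls b"
  "cls 1 = \<one>\<^bsub>T\<^esub>" "cls 0 = \<zero>\<^bsub>T\<^esub>" "cls a \<in> carrier T"
  using ring_hom_mult[OF cls_hom, of a b] ring_hom_add[OF cls_hom, of a b]
    ring_hom_one[OF cls_hom] ring_hom_zero[OF cls_hom PSr.ring_axioms Tr.ring_axioms]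
    carrier_T by auto

lemma cls_uminus [simp]: "\<ominus>\<^bsub>T\<^esub> cls a = cls (- a)"
  by (rule Tr.minus_equality) (simp_all flip: cls_simps(2,4))

lemma cls_eq_iff: "cls a = cls b \<longleftrightarrow> a - b \<in> I0"
  using PSr.quotient_eq_iff_same_a_r_cos[OF ideal_I0, of a b]
  by (simp add: cls_def a_minus_def)

lemma gens_carrier [simp]: "xT \<in> carrier T" "yT \<in> carrier T" "zT \<in> carrier T" "wT \<in> carrier T"
  by (simp_all add: xT_def yT_def zT_def wT_def)

section \<open>Evaluation at x = y = 0\<close>

text \<open>ev a is the series a(0, 0, z, w), an element of R[[z]][[w]]: its coefficient of
  w^j z^i is the coefficient of w^j z^i x^0 y^0 in a.\<close>
definition ev :: "ps4 \<Rightarrow> real fps fps" where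
  "ev a = Abs_fps (\<lambda>j. Abs_fps (\<lambda>i. a $ j $ i $ 0 $ 0))"

lemma ev_nth [simp]: "ev a $ j $ i = a $ j $ i $ 0 $ 0"
  by (simp add: ev_def)

lemma ev_add [simp]: "ev (a + b) = ev a + ev b"
  and ev_uminus [simp]: "ev (- a) = - ev a"
  and ev_diff [simp]: "ev (a - b) = ev a - ev b"
  and ev_mult [simp]: "ev (a * b) = ev a * ev b"
  and ev_one [simp]: "ev 1 = 1"
  and ev_zero [simp]: "ev 0 = 0"
  by (rule fps_ext, rule fps_ext, simp add: fps_mult_nth fps_sum_nth fps_one_nth)+

lemma ev_of_nat [simp]: "ev (of_nat n) = of_nat n"
  by (induct n) simp_all

lemma ev_vars [simp]:
  "ev vx = 0" "ev vy = 0" "ev vz = fps_const fps_X" "ev vw = fps_X"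
  "ev (cst u) = fps_const (fps_const u)"
  by (rule fps_ext, rule fps_ext, simp add: vx_def vy_def vz_def vw_def cst_def fps_X_def)+

text \<open>ev kills x^2 + y^2, hence is well defined on T.\<close>
lemma ev_cls_eq: "cls a = cls b \<Longrightarrow> ev a = ev b"
  by (auto simp: cls_eq_iff I0_eq dest!: arg_cong[where f = ev])

text \<open>A bivariate series without constant term lies in the ideal of its two variables.\<close>
lemma fps2_no_constant_decomp:
  fixes c :: "'a::comm_ring_1 fps fps"
  assumes "c $ 0 $ 0 = 0"
  shows "fps_const (fps_X * fps_shift 1 (c $ 0)) + fps_X * fps_shift 1 c = c"
proof (rule fps_ext)
  have "fps_X * fps_shift 1 (c $ 0) = c $ 0"
    using assms by (intro fps_ext) simp
  then show "(fps_const (fps_X * fps_shift 1 (c $ 0)) + fps_X * fps_shift 1 c) $ n = c $ n" for n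
    by simp
qed

lemma ev_kernel:
  assumes "ev b = 0" obtains b1 b2 where "b = vx * b1 + vy * b2"
proof
  define b1 :: ps4 where
    "b1 = Abs_fps (\<lambda>j. Abs_fps (\<lambda>i. fps_const (fps_shift 1 (b $ j $ i $ 0))))"
  define b2 :: ps4 where "b2 = Abs_fps (\<lambda>j. Abs_fps (\<lambda>i. fps_shift 1 (b $ j $ i)))"
  have "b $ j $ i $ 0 $ 0 = 0" for j i
    using assms by (metis ev_nth fps_zero_nth)
  then show "b = vx * b1 + vy * b2"
    by (intro fps_ext) (simp add: vx_def vy_def b1_def b2_def fps2_no_constant_decomp
        flip: fps_const_mult)
qed

section \<open>Divisibility by the linear form z + u w\<close>

text \<open>lin u = z + u w in K[[z]][[w]] (inner variable z, outer variable w).\<close>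
definition lin :: "'a::comm_ring_1 \<Rightarrow> 'a fps fps" where
  "lin u = fps_const fps_X + fps_const (fps_const u) * fps_X"

lemma lin_mult_nth:
  "(lin u * h) $ j $ i =
     (if i = 0 then 0 else h $ j $ (i - 1)) + u * (if j = 0 then 0 else h $ (j - 1) $ i)"
proof -
  have "lin u * h = fps_const fps_X * h + fps_const (fps_const u) * (fps_X * h)"
    by (simp add: lin_def algebra_simps)
  then show ?thesis by simp
qed

text \<open>A multiple g of z + u w vanishes at z = -u w: on every homogeneous component of
  degree d, the weighted coefficient sum below is zero (the sum telescopes).\<close>
lemma lin_multiple_vanishes:
  fixes u :: "'a::comm_ring_1"
  assumes "g = lin u * h"
  shows "(\<Sum>i\<le>d. g $ (d - i) $ i * (-u) ^ i) = 0"
proof (cases d)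
  case 0
  then show ?thesis unfolding assms lin_mult_nth by simp
next
  case (Suc e)
  have "(\<Sum>i\<le>d. g $ (d - i) $ i * (-u) ^ i) =
      (\<Sum>i\<le>d. (if i = 0 then 0 else h $ (d - i) $ (i - 1)) * (-u) ^ i)
      + (\<Sum>i\<le>d. u * (if d - i = 0 then 0 else h $ (d - i - 1) $ i) * (-u) ^ i)"
    unfolding assms lin_mult_nth by (simp add: sum.distrib algebra_simps)
  also have "(\<Sum>i\<le>d. (if i = 0 then 0 else h $ (d - i) $ (i - 1)) * (-u) ^ i)
      = (\<Sum>i\<le>e. h $ (e - i) $ i * (-u) ^ Suc i)"
    unfolding Suc atMost_atLeast0 sum.atLeast0_atMost_Suc_shift by simp
  also have "(\<Sum>i\<le>d. u * (if d - i = 0 then 0 else h $ (d - i - 1) $ i) * (-u) ^ i)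
      = (\<Sum>i\<le>e. - (h $ (e - i) $ i * (-u) ^ Suc i))"
    unfolding Suc atMost_atLeast0 sum.atLeast0_atMost_Suc
    by (auto intro!: sum.cong simp: Suc_diff_le)
  finally show ?thesis by (simp only: sum_negf add.right_inverse)
qed

text \<open>Hence a nonzero series is divisible by z + u w for only finitely many u: those u are
  roots of the nonzero polynomial attached to a nonzero homogeneous component.\<close>
lemma finite_lin_divisors:
  fixes g :: "'a::{idom, real_normed_div_algebra} fps fps"
  assumes "g \<noteq> 0"
  shows "finite {u. \<exists>h. g = lin u * h}"
proof -
  obtain j i where ji: "g $ j $ i \<noteq> 0"
    using assms by (metis fps_ext fps_zero_nth)
  define d where "d = j + i"
  define c where "c k = g $ (d - k) $ k * (-1) ^ k" for k
  have "c i \<noteq> 0" "i \<le> d"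
    using ji by (auto simp: c_def d_def)
  then have roots: "finite {z. (\<Sum>k\<le>d. c k * z ^ k) = 0}"
    using polyfun_rootbound by blast
  have "{u. \<exists>h. g = lin u * h} \<subseteq> {z. (\<Sum>k\<le>d. c k * z ^ k) = 0}"
  proof safe
    fix u h assume "g = lin u * h"
    from lin_multiple_vanishes[OF this, of d] show "(\<Sum>k\<le>d. c k * u ^ k) = 0"
      unfolding c_def power_minus[of u] by (simp only: mult.assoc)
  qed
  then show ?thesis using roots finite_subset by blast
qed

lemma ideal_Jxy: "ideal Jxy T"
  unfolding Jxy_def by (rule Tr.genideal_ideal) simp

lemma linT_eq: "zT \<oplus>\<^bsub>T\<^esub> cls (cst u) \<otimes>\<^bsub>T\<^esub> wT = cls (vz + cst u * vw)"
  by (simp add: zT_def wT_def)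

lemma ideal_Jxyzu: "ideal (Jxyzu u) T"
  unfolding Jxyzu_def by (rule Tr.genideal_ideal) (simp add: linT_eq)

lemma Jxy_subset_Jxyzu: "Jxy \<subseteq> Jxyzu u"
  unfolding Jxy_def
proof (rule Tr.genideal_minimal[OF ideal_Jxyzu])
  show "{xT, yT} \<subseteq> Jxyzu u"
    using Tr.genideal_self[of "{xT, yT, zT \<oplus>\<^bsub>T\<^esub> (cls (cst u) \<otimes>\<^bsub>T\<^esub> wT)}"]
    unfolding Jxyzu_def by (auto simp: linT_eq)
qed

definition ev_multiples :: "real fps fps \<Rightarrow> ps4 set set" where
  "ev_multiples g = {cls b | b h. ev b = g * h}"

lemma ev_multiples_iff: "a \<in> ev_multiples g \<longleftrightarrow> (\<exists>b h. a = cls b \<and> ev b = g * h)"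
  unfolding ev_multiples_def by blast

lemma ideal_ev_multiples: "ideal (ev_multiples g) T"
proof (rule idealI[OF Tr.ring_axioms])
  show "subgroup (ev_multiples g) (add_monoid T)"
  proof (rule Tr.add.subgroupI)
    show "ev_multiples g \<subseteq> carrier T"
      unfolding ev_multiples_def by auto
    have "cls 0 \<in> ev_multiples g"
      unfolding ev_multiples_iff by (rule exI[of _ 0], rule exI[of _ 0]) simp
    then show "ev_multiples g \<noteq> {}" by blast
  next
    fix a assume "a \<in> ev_multiples g"
    then obtain b h where "a = cls b" "ev b = g * h" unfolding ev_multiples_iff by blast
    then have "\<ominus>\<^bsub>T\<^esub> a = cls (- b) \<and> ev (- b) = g * - h" by simp
    then show "\<ominus>\<^bsub>T\<^esub> a \<in> ev_multiples g" unfolding ev_multiples_iff by blast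
  next
    fix a a' assume "a \<in> ev_multiples g" "a' \<in> ev_multiples g"
    then obtain b h b' h' where "a = cls b" "ev b = g * h" "a' = cls b'" "ev b' = g * h'"
      unfolding ev_multiples_iff by blast
    then have "a \<oplus>\<^bsub>T\<^esub> a' = cls (b + b') \<and> ev (b + b') = g * (h + h')"
      by (simp add: distrib_left)
    then show "a \<oplus>\<^bsub>T\<^esub> a' \<in> ev_multiples g" unfolding ev_multiples_iff by blast
  qed
next
  fix a c assume "a \<in> ev_multiples g" "c \<in> carrier T"
  then obtain b h d where "a = cls b" "ev b = g * h" "c = cls d"
    unfolding ev_multiples_iff carrier_T by blast
  then have "c \<otimes>\<^bsub>T\<^esub> a = cls (d * b) \<and> ev (d * b) = g * (ev d * h)"
    "a \<otimes>\<^bsub>T\<^esub> c = cls (d * b) \<and> ev (d * b) = g * (ev d * h)"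
    by (simp_all add: mult.left_commute Tr.m_comm)
  then show "c \<otimes>\<^bsub>T\<^esub> a \<in> ev_multiples g" "a \<otimes>\<^bsub>T\<^esub> c \<in> ev_multiples g"
    unfolding ev_multiples_iff by blast+
qed

lemma Jxyzu_subset_ev_multiples: "Jxyzu u \<subseteq> ev_multiples (lin u)"
  unfolding Jxyzu_def
proof (rule Tr.genideal_minimal[OF ideal_ev_multiples])
  have "cls vx \<in> ev_multiples (lin u)" "cls vy \<in> ev_multiples (lin u)"
    unfolding ev_multiples_iff using ev_vars(1,2) mult_zero_right by metis+
  moreover have "cls (vz + cst u * vw) \<in> ev_multiples (lin u)"
    unfolding ev_multiples_iff by (rule exI[of _ "vz + cst u * vw"], rule exI[of _ 1]) (simp add: lin_def)
  ultimately show "{xT, yT, zT \<oplus>\<^bsub>T\<^esub> cls (cst u) \<otimes>\<^bsub>T\<^esub> wT} \<subseteq> ev_multiples (lin u)"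
    unfolding linT_eq xT_def yT_def by (simp del: cls_simps)
qed

lemma ev_zero_imp_Jxy: "ev b = 0 \<Longrightarrow> cls b \<in> Jxy"
proof -
  assume "ev b = 0"
  then obtain b1 b2 where b: "b = vx * b1 + vy * b2" by (rule ev_kernel)
  have gens: "xT \<in> Jxy" "yT \<in> Jxy"
    using Tr.genideal_self[of "{xT, yT}"] unfolding Jxy_def by auto
  have "cls b = xT \<otimes>\<^bsub>T\<^esub> cls b1 \<oplus>\<^bsub>T\<^esub> yT \<otimes>\<^bsub>T\<^esub> cls b2"
    by (simp add: b xT_def yT_def)
  also have "\<dots> \<in> Jxy"
    using gens ideal.I_r_closed[OF ideal_Jxy] additive_subgroup.a_closed[OF ideal.axioms(1)[OF ideal_Jxy]]
    by simp
  finally show ?thesis .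
qed

lemma finite_exceptional_parameters:
  assumes "a \<in> carrier T" "a \<notin> Jxy"
  shows "finite {u. a \<in> Jxyzu u}"
proof -
  obtain b where a: "a = cls b"
    using assms(1) carrier_T by blast
  have ev_b: "ev b \<noteq> 0"
    using assms(2) ev_zero_imp_Jxy unfolding a by blast
  have "\<exists>h. ev b = lin u * h" if u: "a \<in> Jxyzu u" for u
  proof -
    have "a \<in> ev_multiples (lin u)"
      using u Jxyzu_subset_ev_multiples by blast
    then obtain b' h where b': "a = cls b'" "ev b' = lin u * h"
      unfolding ev_multiples_iff by blast
    have "ev b = ev b'"
      using a b'(1) by (intro ev_cls_eq) simp
    then have "ev b = lin u * h"
      using b'(2) by simp
    then show ?thesis ..
  qed
  then have "{u. a \<in> Jxyzu u} \<subseteq> {u. \<exists>h. ev b = lin u * h}"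
    by blast
  then show ?thesis
    using finite_lin_divisors[OF ev_b] by (rule finite_subset)
qed

text \<open>T has characteristic zero, so every subring of T is infinite.\<close>
lemma subring_T_infinite:
  assumes "subring R T" shows "infinite R"
proof -
  have in_R: "cls (of_nat n) \<in> R" for n
  proof (induct n)
    case 0
    then show ?case using subringE(2)[OF assms] by simp
  next
    case (Suc n)
    have "cls (of_nat (Suc n)) = \<one>\<^bsub>T\<^esub> \<oplus>\<^bsub>T\<^esub> cls (of_nat n)"
      by (simp only: of_nat_Suc cls_simps)
    then show ?case using Suc subringE(3,7)[OF assms] by simp
  qed
  have "inj (\<lambda>n. cls (of_nat n))"
  proof (rule injI)
    fix n m assume "cls (of_nat n) = cls (of_nat m)"
    then have "ev (of_nat n) = ev (of_nat m)" by (rule ev_cls_eq)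
    then have "(of_nat n :: real fps fps) $ 0 $ 0 = of_nat m $ 0 $ 0" by simp
    then show "n = m" by simp
  qed
  then have "infinite (range (\<lambda>n. cls (of_nat n)))"
    by (rule range_inj_infinite)
  moreover have "range (\<lambda>n. cls (of_nat n)) \<subseteq> R"
    using in_R by auto
  ultimately show ?thesis
    using finite_subset by blast
qed

section \<open>Transcendence descends along an inclusion of ideals\<close>

context ring
begin

lemma rcos_eq_ideal_iff:
  assumes "ideal I R" "a \<in> carrier R"
  shows "I +> a = I \<longleftrightarrow> a \<in> I"
  using abelian_subgroup.a_rcos_self[OF abelian_subgroupI3[OF ideal.axioms(1) is_abelian_group]]
    a_rcos_zero assms by auto

lemma quotient_poly_lift:
  assumes J: "ideal J R" and K: "K \<subseteq> carrier R"
    and p: "p \<in> carrier (((\<lambda>a. J +> a) ` K)[X]\<^bsub>R Quot J\<^esub>)"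
  obtains q where "set q \<subseteq> K" "map (\<lambda>a. J +> a) q = p" "q \<noteq> [] \<Longrightarrow> lead_coeff q \<notin> J"
proof -
  have pK: "set p \<subseteq> (\<lambda>a. J +> a) ` K" "p \<noteq> [] \<Longrightarrow> lead_coeff p \<noteq> J"
    using p unfolding univ_poly_carrier[symmetric] polynomial_def by (auto simp: FactRing_def)
  define q where "q = map (inv_into K (\<lambda>a. J +> a)) p"
  have "set q \<subseteq> K"
    using pK(1) unfolding q_def by (auto intro: inv_into_into)
  moreover have "map (\<lambda>a. J +> a) q = p"
    unfolding q_def map_map using pK(1) by (intro map_idI) (metis comp_apply f_inv_into_f subsetD)
  moreover have "lead_coeff q \<notin> J" if "q \<noteq> []"
    using that pK(2) calculation K rcos_eq_ideal_iff[OF J] by (cases q) auto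
  ultimately show ?thesis using that by blast
qed

lemma quotient_poly_image:
  assumes I: "ideal I R" and K: "K \<subseteq> carrier R" and q: "set q \<subseteq> K" "q \<noteq> [] \<Longrightarrow> lead_coeff q \<notin> I"
  shows "map (\<lambda>a. I +> a) q \<in> carrier (((\<lambda>a. I +> a) ` K)[X]\<^bsub>R Quot I\<^esub>)"
  using q K rcos_eq_ideal_iff[OF I]
  unfolding univ_poly_carrier[symmetric] polynomial_def by (cases q) (auto simp: FactRing_def)

lemma rcos_map_larger_ideal:
  assumes I: "ideal I R" and J: "ideal J R" and IJ: "I \<subseteq> J"
  shows "set xs \<subseteq> carrier R \<Longrightarrow> set ys \<subseteq> carrier R \<Longrightarrow>
    map (\<lambda>a. I +> a) xs = map (\<lambda>a. I +> a) ys \<Longrightarrow> map (\<lambda>a. J +> a) xs = map (\<lambda>a. J +> a) ys"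
proof (induct xs arbitrary: ys)
  case (Cons x xs)
  then obtain y ys' where ys: "ys = y # ys'"
    by (cases ys) auto
  have x: "x \<in> carrier R" and y: "y \<in> carrier R"
    using Cons.prems ys by auto
  have "x \<ominus> y \<in> I"
    using Cons.prems ys quotient_eq_iff_same_a_r_cos[OF I x y] by simp
  then have "J +> x = J +> y"
    using IJ quotient_eq_iff_same_a_r_cos[OF J x y] by blast
  then show ?case
    using Cons ys by simp
qed simp

lemma transcendental_quotient_descends:
  assumes I: "ideal I R" and J: "ideal J R" and IJ: "I \<subseteq> J"
    and K: "K \<subseteq> carrier R" and f: "f \<in> carrier R"
    and tr: "ring.transcendental (R Quot I) ((\<lambda>a. I +> a) ` K) (I +> f)"
    and sep: "\<And>q1 q2. set q1 \<subseteq> K \<Longrightarrow> set q2 \<subseteq> K \<Longrightarrow>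
       eval q1 f \<ominus> eval q2 f \<in> J \<Longrightarrow> eval q1 f \<ominus> eval q2 f \<in> I"
  shows "ring.transcendental (R Quot J) ((\<lambda>a. J +> a) ` K) (J +> f)"
  unfolding ring.transcendental_def[OF ideal.quotient_is_ring[OF J]]
proof (rule inj_onI)
  have hom: "ring_hom_ring R (R Quot I) ((+>) I)" "ring_hom_ring R (R Quot J) ((+>) J)"
    using ideal.rcos_ring_hom_ring I J by blast+
  fix p1 p2
  assume p: "p1 \<in> carrier (((\<lambda>a. J +> a) ` K)[X]\<^bsub>R Quot J\<^esub>)"
    "p2 \<in> carrier (((\<lambda>a. J +> a) ` K)[X]\<^bsub>R Quot J\<^esub>)"
    and same: "ring.eval (R Quot J) p1 (J +> f) = ring.eval (R Quot J) p2 (J +> f)"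
  obtain q1 where q1: "set q1 \<subseteq> K" "map (\<lambda>a. J +> a) q1 = p1" "q1 \<noteq> [] \<Longrightarrow> lead_coeff q1 \<notin> J"
    using quotient_poly_lift[OF J K p(1)] by blast
  obtain q2 where q2: "set q2 \<subseteq> K" "map (\<lambda>a. J +> a) q2 = p2" "q2 \<noteq> [] \<Longrightarrow> lead_coeff q2 \<notin> J"
    using quotient_poly_lift[OF J K p(2)] by blast
  have qR: "set q1 \<subseteq> carrier R" "set q2 \<subseteq> carrier R"
    using q1(1) q2(1) K by auto
  have evR: "eval q1 f \<in> carrier R" "eval q2 f \<in> carrier R"
    using eval_in_carrier qR f by auto
  have "J +> eval q1 f = J +> eval q2 f"
    using same q1(2) q2(2) ring_hom_ring.eval_hom'[OF hom(2) f] qR by simp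
  then have "eval q1 f \<ominus> eval q2 f \<in> I"
    using sep q1(1) q2(1) quotient_eq_iff_same_a_r_cos[OF J evR] by blast
  then have "ring.eval (R Quot I) (map (\<lambda>a. I +> a) q1) (I +> f)
      = ring.eval (R Quot I) (map (\<lambda>a. I +> a) q2) (I +> f)"
    using quotient_eq_iff_same_a_r_cos[OF I evR] ring_hom_ring.eval_hom'[OF hom(1) f] qR by simp
  moreover have "map (\<lambda>a. I +> a) q1 \<in> carrier (((\<lambda>a. I +> a) ` K)[X]\<^bsub>R Quot I\<^esub>)"
    "map (\<lambda>a. I +> a) q2 \<in> carrier (((\<lambda>a. I +> a) ` K)[X]\<^bsub>R Quot I\<^esub>)"
    using quotient_poly_image[OF I K] q1 q2 IJ by blast+
  ultimately have "map (\<lambda>a. I +> a) q1 = map (\<lambda>a. I +> a) q2"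
    using tr unfolding ring.transcendental_def[OF ideal.quotient_is_ring[OF I]] inj_on_def by blast
  then show "p1 = p2"
    using rcos_map_larger_ideal[OF I J IJ qR] q1(2) q2(2) by simp
qed

end

section \<open>Cardinality bounds\<close>

lemma card_of_lists_length_infinite:
  assumes "infinite A" shows "|{xs \<in> lists A. length xs = n}| \<le>o |A|"
proof (induct n)
  case 0
  obtain a where "a \<in> A"
    using assms by (metis finite.emptyI ex_in_conv)
  then have "inj_on (\<lambda>_. a) {xs \<in> lists A. length xs = 0} \<and>
      (\<lambda>_. a) ` {xs \<in> lists A. length xs = 0} \<subseteq> A"
    by (auto simp: inj_on_def)
  then show ?case using card_of_ordLeq by blast
next
  case (Suc n)
  have eq: "{xs \<in> lists A. length xs = Suc n}
      = (\<lambda>(a, xs). a # xs) ` (SIGMA a:A. {xs \<in> lists A. length xs = n})"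
  proof (intro equalityI subsetI)
    fix xs assume xs: "xs \<in> {xs \<in> lists A. length xs = Suc n}"
    then obtain a ys where "xs = a # ys" by (cases xs) auto
    with xs show "xs \<in> (\<lambda>(a, xs). a # xs) ` (SIGMA a:A. {xs \<in> lists A. length xs = n})"
      by (intro image_eqI[where x = "(a, ys)"]) auto
  qed auto
  have "|{xs \<in> lists A. length xs = Suc n}| \<le>o |SIGMA a:A. {xs \<in> lists A. length xs = n}|"
    unfolding eq by (rule card_of_image)
  moreover have "|SIGMA a:A. {xs \<in> lists A. length xs = n}| \<le>o |A|"
    using Suc assms by (intro card_of_Sigma_ordLeq_infinite) auto
  ultimately show ?case using ordLeq_transitive by blast
qed

lemma card_of_lists_infinite:
  assumes "infinite A" shows "|lists A| \<le>o |A|"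
proof -
  have "lists A = (\<Union>n. {xs \<in> lists A. length xs = n})" by auto
  moreover have "|\<Union>n. {xs \<in> lists A. length xs = n}| \<le>o |A|"
    using assms card_of_lists_length_infinite infinite_iff_card_of_nat
    by (intro card_of_UNION_ordLeq_infinite) auto
  ultimately show ?thesis by simp
qed

lemma card_of_image_list_pairs:
  assumes "infinite K" shows "|F ` (lists K \<times> lists K)| \<le>o |K|"
proof -
  have "|lists K \<times> lists K| \<le>o |K|"
    using card_of_lists_infinite[OF assms] assms by (intro card_of_Sigma_ordLeq_infinite) auto
  then show ?thesis
    using card_of_image ordLeq_transitive by blast
qed

lemma card_of_exceptional_parameters:
  assumes R: "infinite R" and D: "|D| \<le>o |R|" "D \<subseteq> carrier T"
  shows "|\<Union>d \<in> D - Jxy. {u. d \<in> Jxyzu u}| \<le>o |R|"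
proof (rule card_of_UNION_ordLeq_infinite[OF R])
  show "|D - Jxy| \<le>o |R|"
    using ordLeq_transitive[OF card_of_mono1 D(1)] by blast
  show "\<forall>d \<in> D - Jxy. |{u. d \<in> Jxyzu u}| \<le>o |R|"
    using finite_exceptional_parameters D(2) ordLess_imp_ordLeq[OF finite_ordLess_infinite2[OF _ R]]
    by blast
qed

theorem mainTheorem15:
  fixes R :: "ps4 set set" and \<omega> h :: "ps4 set"
  assumes "N_subring R"
    and "\<omega> \<in> carrier T" and "h \<in> carrier T"
    and "ring.transcendental (T Quot Jxy) (img Jxy R)
           (Jxy +>\<^bsub>T\<^esub> (\<omega> \<oplus>\<^bsub>T\<^esub> zT \<otimes>\<^bsub>T\<^esub> h))"
  shows "\<exists>\<Psi> :: real set. |\<Psi>| \<le>o |R| \<and>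
           (\<forall>u \<in> UNIV - \<Psi>. ring.transcendental (T Quot Jxyzu u) (img (Jxyzu u) R)
              (Jxyzu u +>\<^bsub>T\<^esub> (\<omega> \<oplus>\<^bsub>T\<^esub> zT \<otimes>\<^bsub>T\<^esub> h)))"
proof -
  define f where "f = \<omega> \<oplus>\<^bsub>T\<^esub> zT \<otimes>\<^bsub>T\<^esub> h"
  have f: "f \<in> carrier T"
    unfolding f_def using assms(2,3) by simp
  have R: "R \<subseteq> carrier T" "infinite R"
    using assms(1) subringE(1) subring_T_infinite unfolding N_subring_def by blast+
  define D where "D = (\<lambda>(q1, q2). Tr.eval q1 f \<ominus>\<^bsub>T\<^esub> Tr.eval q2 f) ` (lists R \<times> lists R)"
  define \<Psi> where "\<Psi> = (\<Union>d \<in> D - Jxy. {u. d \<in> Jxyzu u})"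
  have D: "Tr.eval q1 f \<ominus>\<^bsub>T\<^esub> Tr.eval q2 f \<in> D" if "set q1 \<subseteq> R" "set q2 \<subseteq> R" for q1 q2
    using that unfolding D_def by (force simp: in_lists_conv_set)
  have "D \<subseteq> carrier T"
    using R(1) unfolding D_def
    by (auto intro!: Tr.minus_closed Tr.eval_in_carrier f simp: in_lists_conv_set)
  then have "|\<Psi>| \<le>o |R|"
    unfolding \<Psi>_def D_def by (rule card_of_exceptional_parameters[OF R(2) card_of_image_list_pairs[OF R(2)]])
  moreover have "ring.transcendental (T Quot Jxyzu u) (img (Jxyzu u) R) (Jxyzu u +>\<^bsub>T\<^esub> f)"
    if "u \<notin> \<Psi>" for u
    using Tr.transcendental_quotient_descends[OF ideal_Jxy ideal_Jxyzu Jxy_subset_Jxyzu R(1) f]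
      assms(4) D that unfolding img_def \<Psi>_def f_def[symmetric] by blast
  ultimately show ?thesis
    unfolding f_def by blast
qed

end
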